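(* Let $G$ be an extraspecial or almost extraspecial $2$-group of order $2^n$, $n\geq 3$. Then $e_2(G)\leq e_2(D_8\times C_2^{n-3})$.
   Context: A finite $2$-group $G$ is extraspecial if $Z(G)=G'=\Phi(G)$ has order $2$, and almost extraspecial if $G'=\Phi(G)$ has order $2$ and $Z(G)\cong C_4$. For a finite $2$-group $H$ and $i\ge 2$, $e_i(H)$ denotes the number of elementary abelian subgroups of $H$ of order $2^i$ containing the Frattini subgroup $\Phi(H)$. $D_8$ is the dihedral group of order $8$, $C_2^m$ the elementary abelian group of order $2^m$. *)

theory Defs
  imports "HOL-Algebra.Algebra"
begin

definition group_center :: "('a, 'b) monoid_scheme \<Rightarrow> 'a set" where
  "group_center G = {z \<in> carrier G. \<forall>g \<in> carrier G. z \<otimes>\<^bsub>G\<^esub> g = g \<otimes>\<^bsub>G\<^esub> z}"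

definition maximal_subgroup :: "'a set \<Rightarrow> ('a, 'b) monoid_scheme \<Rightarrow> bool" where
  "maximal_subgroup M G \<longleftrightarrow> subgroup M G \<and> M \<noteq> carrier G \<and>
     (\<forall>K. subgroup K G \<and> M \<subseteq> K \<longrightarrow> K = M \<or> K = carrier G)"

definition frattini :: "('a, 'b) monoid_scheme \<Rightarrow> 'a set" where
  "frattini G = carrier G \<inter> \<Inter>{M. maximal_subgroup M G}"

definition elementary_abelian_subgroup :: "'a set \<Rightarrow> ('a, 'b) monoid_scheme \<Rightarrow> bool" where
  "elementary_abelian_subgroup A G \<longleftrightarrow> subgroup A G \<and>
     (\<forall>x\<in>A. \<forall>y\<in>A. x \<otimes>\<^bsub>G\<^esub> y = y \<otimes>\<^bsub>G\<^esub> x) \<and>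
     (\<forall>x\<in>A. x [^]\<^bsub>G\<^esub> (2::nat) = \<one>\<^bsub>G\<^esub>)"

definition e_num :: "nat \<Rightarrow> ('a, 'b) monoid_scheme \<Rightarrow> nat" where
  "e_num i H = card {A. elementary_abelian_subgroup A H \<and> card A = 2 ^ i \<and> frattini H \<subseteq> A}"

definition extraspecial :: "('a, 'b) monoid_scheme \<Rightarrow> bool" where
  "extraspecial G \<longleftrightarrow> group_center G = derived G (carrier G) \<and>
     derived G (carrier G) = frattini G \<and> card (frattini G) = 2"

definition almost_extraspecial :: "('a, 'b) monoid_scheme \<Rightarrow> bool" where
  "almost_extraspecial G \<longleftrightarrow> derived G (carrier G) = frattini G \<and> card (frattini G) = 2 \<and>
     (G\<lparr>carrier := group_center G\<rparr>) \<cong> integer_mod_group 4"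

text \<open>Dihedral group of order 8: (a,b) represents r^a s^b, with s r s = r^-1.\<close>
definition D8 :: "(int \<times> bool) monoid" where
  "D8 = \<lparr>carrier = {0..<4} \<times> UNIV,
         monoid.mult = (\<lambda>(a, b) (c, d). ((a + (if b then - c else c)) mod 4, b \<noteq> d)),
         one = (0, False)\<rparr>"

definition C2pow :: "nat \<Rightarrow> (nat \<Rightarrow> int) monoid" where
  "C2pow m = product_group {..<m} (\<lambda>_. integer_mod_group 2)"

end

theory Submission
  imports Defs
begin

(* Write S(H) for the set of solutions of x^2 = 1 in H.  When the Frattini subgroup is {1, z},
   the elementary abelian subgroups of order 4 over it are the groups {1, z, x, z x}, and any two
   of them meet exactly in {1, z}; so e_2(H) is governed by |S(H)|.  For G the commutator subgroup
   has order 2, so G is nonabelian, and a centralizer argument bounds |S(G)| by 3/4 |G| = 6 * 2^(n-3);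
   hence 2 e_2(G) < 6 * 2^(n-3).  In D_8 x C_2^(n-3) the element z = (r^2, 1) is a central involution,
   so every x in S outside {1, z} generates such a subgroup together with z, and |S| = 6 * 2^(n-3)
   exactly; hence 2 e_2(D_8 x C_2^(n-3)) >= 6 * 2^(n-3) - 2. *)

definition square_roots_one :: "('a, 'b) monoid_scheme \<Rightarrow> 'a set" where
  "square_roots_one G = {x \<in> carrier G. x \<otimes>\<^bsub>G\<^esub> x = \<one>\<^bsub>G\<^esub>}"

definition klein_fours_over :: "'a set \<Rightarrow> ('a, 'b) monoid_scheme \<Rightarrow> 'a set set" where
  "klein_fours_over Z G = {A. elementary_abelian_subgroup A G \<and> card A = 4 \<and> Z \<subseteq> A}"

definition centralizer :: "('a, 'b) monoid_scheme \<Rightarrow> 'a \<Rightarrow> 'a set" where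
  "centralizer G x = {y \<in> carrier G. x \<otimes>\<^bsub>G\<^esub> y = y \<otimes>\<^bsub>G\<^esub> x}"

lemma e_num_2_eq_card_klein_fours: "e_num 2 G = card (klein_fours_over (frattini G) G)"
  by (simp add: e_num_def klein_fours_over_def)

lemma (in group) square_roots_one_subset: "square_roots_one G \<subseteq> carrier G"
  by (auto simp: square_roots_one_def)

lemma (in group) one_in_square_roots_one: "\<one> \<in> square_roots_one G"
  by (simp add: square_roots_one_def)

lemma (in group) one_in_frattini: "\<one> \<in> frattini G"
  by (auto simp: frattini_def maximal_subgroup_def subgroup.one_closed)

lemma (in group) frattini_eq_pair_if_card_2:
  assumes "card (frattini G) = 2"
  obtains z where "frattini G = {\<one>, z}" "z \<noteq> \<one>"
proof -
  obtain u v where "frattini G = {u, v}" "u \<noteq> v" using assms card_2_iff by metis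
  then show ?thesis using that one_in_frattini by auto
qed

lemma (in group) noncommutative_if_derived_nontrivial:
  assumes "derived G (carrier G) \<noteq> {\<one>}"
  shows "\<not> (\<forall>x\<in>carrier G. \<forall>y\<in>carrier G. x \<otimes> y = y \<otimes> x)"
  using assms comm_group.derived_eq_singleton group_comm_groupI by blast

section \<open>Square roots of 1 in a nonabelian group\<close>

lemma (in group) subgroup_eq_carrier_if_card_gt_half:
  assumes fin: "finite (carrier G)" and H: "subgroup H G" and big: "order G < 2 * card H"
  shows "H = carrier G"
proof -
  have index: "card (rcosets H) * card H = order G" using lagrange[OF H] .
  have "card (rcosets H) < 2"
  proof (rule ccontr)
    assume "\<not> card (rcosets H) < 2"
    then have "2 * card H \<le> card (rcosets H) * card H" by simp
    then show False using index big by simp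
  qed
  moreover have "order G \<noteq> 0" using fin order_gt_0_iff_finite by blast
  then have "card (rcosets H) \<noteq> 0" using index by (metis mult_0)
  ultimately have "card (rcosets H) = 1" by simp
  then have "card H = card (carrier G)" using index by (simp add: order_def)
  then show ?thesis using card_subset_eq[OF fin subgroup.subset[OF H]] by simp
qed

lemma (in group) centralizer_subgroup:
  assumes x: "x \<in> carrier G"
  shows "subgroup (centralizer G x) G"
proof
  show "centralizer G x \<subseteq> carrier G" by (auto simp: centralizer_def)
  show "\<one> \<in> centralizer G x" using x by (simp add: centralizer_def)
next
  fix a b assume "a \<in> centralizer G x" "b \<in> centralizer G x"
  then have a: "a \<in> carrier G" "x \<otimes> a = a \<otimes> x" and b: "b \<in> carrier G" "x \<otimes> b = b \<otimes> x"
    by (auto simp: centralizer_def)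
  have "x \<otimes> (a \<otimes> b) = a \<otimes> (x \<otimes> b)" using a x b by (metis m_assoc)
  also have "\<dots> = (a \<otimes> b) \<otimes> x" using a b x by (simp add: m_assoc)
  finally show "a \<otimes> b \<in> centralizer G x" using a b by (simp add: centralizer_def)
next
  fix a assume "a \<in> centralizer G x"
  then have a: "a \<in> carrier G" "x \<otimes> a = a \<otimes> x" by (auto simp: centralizer_def)
  have "x \<otimes> inv a = inv a \<otimes> (a \<otimes> x) \<otimes> inv a" using a(1) x by (simp add: m_assoc[symmetric])
  also have "\<dots> = inv a \<otimes> (x \<otimes> a) \<otimes> inv a" using a by simp
  also have "\<dots> = inv a \<otimes> x" using a(1) x by (simp add: m_assoc)
  finally show "inv a \<in> centralizer G x" using a by (simp add: centralizer_def)
qed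

lemma (in group) inv_eq_self_if_square_one: "x \<in> carrier G \<Longrightarrow> x \<otimes> x = \<one> \<Longrightarrow> inv x = x"
  by (rule inv_equality)

lemma (in group) square_roots_one_commute:
  assumes "x \<in> square_roots_one G" "y \<in> square_roots_one G" "x \<otimes> y \<in> square_roots_one G"
  shows "x \<otimes> y = y \<otimes> x"
proof -
  have x: "x \<in> carrier G" "inv x = x" and y: "y \<in> carrier G" "inv y = y"
    and xy: "inv (x \<otimes> y) = x \<otimes> y"
    using assms by (auto simp: square_roots_one_def inv_eq_self_if_square_one)
  have "x \<otimes> y = inv (x \<otimes> y)" using xy by simp
  also have "\<dots> = y \<otimes> x" using x y by (simp add: inv_mult_group)
  finally show ?thesis .
qed

(* More than |G|/2 elements y satisfy y \<in> S and x y \<in> S, and each such y commutes with x. *)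
lemma (in group) square_roots_one_central_if_many:
  assumes fin: "finite (carrier G)" and many: "3 * order G < 4 * card (square_roots_one G)"
    and x: "x \<in> square_roots_one G"
  shows "centralizer G x = carrier G"
proof -
  let ?S = "square_roots_one G"
  let ?T = "(\<lambda>y. x \<otimes> y) ` ?S"
  have xc: "x \<in> carrier G" and xx: "x \<otimes> x = \<one>" using x by (auto simp: square_roots_one_def)
  have finS: "finite ?S" using fin square_roots_one_subset finite_subset by blast
  have "inj_on (\<lambda>y. x \<otimes> y) ?S"
    using xc square_roots_one_subset by (intro inj_onI) (simp add: subset_iff)
  then have "card ?T = card ?S" by (rule card_image)
  moreover have "card (?S \<union> ?T) \<le> order G"
    unfolding order_def using square_roots_one_subset xc fin by (intro card_mono) auto
  moreover have "card (?S \<union> ?T) + card (?S \<inter> ?T) = card ?S + card ?T"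
    using card_Un_Int[OF finS finite_imageI[OF finS], of "\<lambda>y. x \<otimes> y"] by simp
  ultimately have "order G < 2 * card (?S \<inter> ?T)" using many by linarith
  moreover have "?S \<inter> ?T \<subseteq> centralizer G x"
  proof
    fix y assume y: "y \<in> ?S \<inter> ?T"
    then obtain s where s: "s \<in> ?S" "y = x \<otimes> s" by blast
    have sc: "s \<in> carrier G" using s(1) square_roots_one_subset by blast
    have "x \<otimes> y = s" using s(2) xc sc xx by (simp add: m_assoc[symmetric])
    then have "x \<otimes> y = y \<otimes> x" using square_roots_one_commute[OF x] y s(1) by simp
    then show "y \<in> centralizer G x" using y square_roots_one_subset by (auto simp: centralizer_def)
  qed
  then have "card (?S \<inter> ?T) \<le> card (centralizer G x)"
    using fin by (intro card_mono) (auto simp: centralizer_def)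
  ultimately show ?thesis
    using subgroup_eq_carrier_if_card_gt_half[OF fin centralizer_subgroup[OF xc]] by linarith
qed

lemma (in group) four_card_square_roots_one_le:
  assumes fin: "finite (carrier G)"
    and noncomm: "\<not> (\<forall>x\<in>carrier G. \<forall>y\<in>carrier G. x \<otimes> y = y \<otimes> x)"
  shows "4 * card (square_roots_one G) \<le> 3 * order G"
proof (rule ccontr)
  let ?S = "square_roots_one G"
  assume "\<not> ?thesis"
  then have many: "3 * order G < 4 * card ?S" by simp
  have "centralizer G g = carrier G" if g: "g \<in> carrier G" for g
  proof (rule subgroup_eq_carrier_if_card_gt_half[OF fin centralizer_subgroup[OF g]])
    have "?S \<subseteq> centralizer G g"
    proof
      fix s assume s: "s \<in> ?S"
      then have "g \<in> centralizer G s" using square_roots_one_central_if_many[OF fin many] g by blast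
      then show "s \<in> centralizer G g" using s square_roots_one_subset by (auto simp: centralizer_def)
    qed
    then have "card ?S \<le> card (centralizer G g)"
      using fin by (intro card_mono) (auto simp: centralizer_def)
    then show "order G < 2 * card (centralizer G g)" using many by linarith
  qed
  then show False using noncomm by (auto simp: centralizer_def)
qed

section \<open>Klein four-subgroups containing a fixed involution\<close>

lemma (in group) nat_pow_2: "x \<in> carrier G \<Longrightarrow> x [^] (2::nat) = x \<otimes> x"
  by (simp add: numeral_2_eq_2)

lemma (in group) card_klein_four:
  assumes z: "z \<in> carrier G" "z \<noteq> \<one>" "z \<otimes> z = \<one>"
    and x: "x \<in> carrier G" "x \<noteq> \<one>" "x \<noteq> z"
  shows "card {\<one>, z, x, z \<otimes> x} = 4"
proof -
  have "z \<otimes> x \<noteq> \<one>"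
  proof
    assume "z \<otimes> x = \<one>"
    then have "z \<otimes> x = z \<otimes> z" using z by simp
    then have "x = z" using z(1) x(1) l_cancel by blast
    then show False using x by simp
  qed
  moreover have "z \<otimes> x \<noteq> z" using z x by (metis r_one l_cancel one_closed)
  moreover have "z \<otimes> x \<noteq> x" using z x by (metis l_one r_cancel one_closed)
  ultimately show ?thesis using z x by auto
qed

lemma (in group) klein_four_elementary_abelian:
  assumes z: "z \<in> carrier G" "z \<otimes> z = \<one>"
    and x: "x \<in> carrier G" "x \<otimes> x = \<one>" "x \<otimes> z = z \<otimes> x"
  shows "elementary_abelian_subgroup {\<one>, z, x, z \<otimes> x} G"
proof -
  let ?K = "{\<one>, z, x, z \<otimes> x}"
  have zzx: "z \<otimes> (z \<otimes> x) = x" using z x(1) by (simp add: m_assoc[symmetric])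
  have "x \<otimes> (z \<otimes> x) = x \<otimes> (x \<otimes> z)" using x(3) by simp
  also have "\<dots> = z" using x(1,2) z(1) by (simp add: m_assoc[symmetric])
  finally have xzx: "x \<otimes> (z \<otimes> x) = z" .
  have zxz: "(z \<otimes> x) \<otimes> z = x" using z(1) x zzx by (simp add: m_assoc)
  have zxx: "(z \<otimes> x) \<otimes> x = z" using z(1) x(1,2) by (simp add: m_assoc)
  have zx: "(z \<otimes> x) \<otimes> (z \<otimes> x) = \<one>" using z x(1) xzx by (simp add: m_assoc)
  note products = zzx xzx zxz zxx
  have "subgroup ?K G"
  proof
    show "?K \<subseteq> carrier G" using z x by auto
    show "\<one> \<in> ?K" by simp
  next
    fix a b assume "a \<in> ?K" "b \<in> ?K"
    then show "a \<otimes> b \<in> ?K" using z x zx products by auto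
  next
    fix a assume "a \<in> ?K"
    then show "inv a \<in> ?K" using z x zx inv_eq_self_if_square_one by auto
  qed
  moreover have "\<forall>a\<in>?K. \<forall>b\<in>?K. a \<otimes> b = b \<otimes> a" using z x zx products by auto
  moreover have "\<forall>a\<in>?K. a [^] (2::nat) = \<one>" using z x zx by (auto simp: nat_pow_2)
  ultimately show ?thesis unfolding elementary_abelian_subgroup_def by blast
qed

lemma (in group) elementary_abelian_subset_square_roots_one:
  assumes "elementary_abelian_subgroup A G"
  shows "A \<subseteq> square_roots_one G"
proof
  fix a assume "a \<in> A"
  then have "a \<in> carrier G" "a [^] (2::nat) = \<one>"
    using assms subgroup.mem_carrier by (auto simp: elementary_abelian_subgroup_def)
  then show "a \<in> square_roots_one G" by (simp add: square_roots_one_def nat_pow_2)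
qed

lemma (in group) finite_klein_fours_over:
  assumes "finite (carrier G)"
  shows "finite (klein_fours_over Z G)"
proof (rule finite_subset)
  show "klein_fours_over Z G \<subseteq> Pow (carrier G)"
    using elementary_abelian_subset_square_roots_one square_roots_one_subset
    by (fastforce simp: klein_fours_over_def)
qed (use assms in simp)

lemma (in group) klein_four_eq:
  assumes A: "elementary_abelian_subgroup A G" "card A = 4"
    and z: "z \<in> A" "z \<noteq> \<one>" and x: "x \<in> A" "x \<noteq> \<one>" "x \<noteq> z"
  shows "A = {\<one>, z, x, z \<otimes> x}"
proof -
  have sub: "subgroup A G" using A(1) by (simp add: elementary_abelian_subgroup_def)
  have "z \<in> square_roots_one G" using A(1) z(1) elementary_abelian_subset_square_roots_one by blast
  then have "card {\<one>, z, x, z \<otimes> x} = 4"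
    using z x subgroup.mem_carrier[OF sub] by (intro card_klein_four) (auto simp: square_roots_one_def)
  moreover have "{\<one>, z, x, z \<otimes> x} \<subseteq> A" using sub z x by (auto intro: subgroup.one_closed subgroup.m_closed)
  moreover have "finite A" using A(2) card.infinite by fastforce
  ultimately show ?thesis using A(2) card_subset_eq by metis
qed

(* Distinct members of the family meet exactly in {1, z}, so their differences with {1, z}
   are disjoint pairs inside the set of square roots of 1. *)
lemma (in group) two_card_klein_fours_le:
  assumes fin: "finite (carrier G)" and z: "z \<noteq> \<one>"
  shows "2 * card (klein_fours_over {\<one>, z} G) \<le> card (square_roots_one G - {\<one>, z})"
proof -
  let ?F = "klein_fours_over {\<one>, z} G" and ?Z = "{\<one>, z}"
  have eas: "elementary_abelian_subgroup A G" and card4: "card A = 4" and over: "?Z \<subseteq> A"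
    if "A \<in> ?F" for A using that by (auto simp: klein_fours_over_def)
  have finA: "finite A" if "A \<in> ?F" for A using card4[OF that] card.infinite by fastforce
  have pairs: "card (A - ?Z) = 2" if "A \<in> ?F" for A
    using card_Diff_subset[OF _ over[OF that]] finA[OF that] card4[OF that] z by simp
  have disjoint: "(A - ?Z) \<inter> (B - ?Z) = {}" if "A \<in> ?F" "B \<in> ?F" "A \<noteq> B" for A B
  proof (rule ccontr)
    assume "(A - ?Z) \<inter> (B - ?Z) \<noteq> {}"
    then obtain x where x: "x \<in> A" "x \<in> B" "x \<notin> ?Z" by auto
    have "A = {\<one>, z, x, z \<otimes> x}"
      using over[OF that(1)] x z by (intro klein_four_eq eas card4 that(1)) auto
    moreover have "B = {\<one>, z, x, z \<otimes> x}"
      using over[OF that(2)] x z by (intro klein_four_eq eas card4 that(2)) auto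
    ultimately show False using that by simp
  qed
  have "2 * card ?F = (\<Sum>A\<in>?F. card (A - ?Z))" using pairs by simp
  also have "\<dots> = card (\<Union>A\<in>?F. A - ?Z)"
    using finite_klein_fours_over[OF fin] finA disjoint by (intro card_UN_disjoint[symmetric]) auto
  also have "\<dots> \<le> card (square_roots_one G - ?Z)"
    using fin square_roots_one_subset elementary_abelian_subset_square_roots_one[OF eas]
    by (intro card_mono) (auto intro: finite_subset)
  finally show ?thesis .
qed

(* With z a central involution, each x \<in> S outside {1, z} lies in the member {1, z, x, z x}
   of the family, and each member contains at most two elements of S outside {1, z}. *)
lemma (in group) card_le_two_card_klein_fours:
  assumes fin: "finite (carrier G)"
    and z: "z \<in> carrier G" "z \<noteq> \<one>" "z \<otimes> z = \<one>" "\<And>x. x \<in> carrier G \<Longrightarrow> x \<otimes> z = z \<otimes> x"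
    and Z: "Z \<subseteq> {\<one>, z}"
  shows "card (square_roots_one G - {\<one>, z}) \<le> 2 * card (klein_fours_over Z G)"
proof -
  let ?S = "square_roots_one G - {\<one>, z}"
  let ?K = "\<lambda>x. {\<one>, z, x, z \<otimes> x}"
  have finS: "finite ?S" using fin square_roots_one_subset finite_subset by blast
  have "?K ` ?S \<subseteq> klein_fours_over Z G"
  proof
    fix A assume "A \<in> ?K ` ?S"
    then obtain x where x: "x \<in> square_roots_one G" "x \<notin> {\<one>, z}" and A: "A = ?K x" by blast
    have xc: "x \<in> carrier G" "x \<otimes> x = \<one>" using x(1) by (auto simp: square_roots_one_def)
    have "elementary_abelian_subgroup A G"
      unfolding A using klein_four_elementary_abelian z xc by blast
    moreover have "card A = 4" unfolding A using card_klein_four z xc x(2) by blast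
    ultimately show "A \<in> klein_fours_over Z G" using Z by (auto simp: A klein_fours_over_def)
  qed
  then have "card (?K ` ?S) \<le> card (klein_fours_over Z G)"
    using fin by (intro card_mono finite_klein_fours_over)
  moreover have "card ?S \<le> (\<Sum>A\<in>?K ` ?S. card (A - {\<one>, z}))"
  proof -
    have "card ?S \<le> card (\<Union>A\<in>?K ` ?S. A - {\<one>, z})" using finS by (intro card_mono) auto
    also have "\<dots> \<le> (\<Sum>A\<in>?K ` ?S. card (A - {\<one>, z}))" using finS by (intro card_UN_le) auto
    finally show ?thesis .
  qed
  moreover have "card (A - {\<one>, z}) \<le> 2" if "A \<in> ?K ` ?S" for A
  proof -
    obtain x where "A = ?K x" using \<open>A \<in> ?K ` ?S\<close> by blast
    then have "card (A - {\<one>, z}) \<le> card {x, z \<otimes> x}" by (intro card_mono) auto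
    also have "\<dots> \<le> 2" by (simp add: card_insert_if)
    finally show ?thesis .
  qed
  then have "(\<Sum>A\<in>?K ` ?S. card (A - {\<one>, z})) \<le> 2 * card (?K ` ?S)"
    using sum_mono[of "?K ` ?S" "\<lambda>A. card (A - {\<one>, z})" "\<lambda>_. 2"] by simp
  ultimately show ?thesis by linarith
qed

lemma (in group) e_num_2_upper_bound:
  assumes fin: "finite (carrier G)"
    and derived: "derived G (carrier G) = frattini G" and card_frattini: "card (frattini G) = 2"
  shows "8 * e_num 2 G + 4 \<le> 3 * order G"
proof -
  obtain z where frattini: "frattini G = {\<one>, z}" and z: "z \<noteq> \<one>"
    using frattini_eq_pair_if_card_2[OF card_frattini] .
  have "derived G (carrier G) \<noteq> {\<one>}" using derived frattini z by auto
  then have "4 * card (square_roots_one G) \<le> 3 * order G"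
    using four_card_square_roots_one_le[OF fin] noncommutative_if_derived_nontrivial by blast
  moreover have "2 * e_num 2 G \<le> card (square_roots_one G - {\<one>, z})"
    using two_card_klein_fours_le[OF fin z] by (simp add: e_num_2_eq_card_klein_fours frattini)
  moreover have "card (square_roots_one G - {\<one>, z}) < card (square_roots_one G)"
    using fin one_in_square_roots_one square_roots_one_subset
    by (intro psubset_card_mono) (auto intro: finite_subset)
  ultimately show ?thesis by linarith
qed

section \<open>The group D_8 \<times> C_2^m\<close>

lemma D8_carrier: "carrier D8 = {0, 1, 2, 3} \<times> UNIV"
proof -
  have "{0..<4::int} = {0, 1, 2, 3}" by auto
  then show ?thesis by (simp add: D8_def)
qed

lemma D8_mult: "(a, b) \<otimes>\<^bsub>D8\<^esub> (c, d) = ((a + (if b then - c else c)) mod 4, b \<noteq> d)"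
  by (simp add: D8_def)

lemma D8_one: "\<one>\<^bsub>D8\<^esub> = (0, False)"
  by (simp add: D8_def)

lemma D8_mult_assoc_rotation:
  fixes a c e :: int
  shows "((a + (if b then - c else c)) mod 4 + (if b \<noteq> d then - e else e)) mod 4 =
         (a + (if b then - ((c + (if d then - e else e)) mod 4) else (c + (if d then - e else e)) mod 4)) mod 4"
  by (cases b; cases d) (simp_all add: mod_simps diff_conv_add_uminus[symmetric] algebra_simps)

lemma D8_group: "group D8"
proof (rule groupI)
  fix x y assume "x \<in> carrier D8" "y \<in> carrier D8"
  then show "x \<otimes>\<^bsub>D8\<^esub> y \<in> carrier D8"
    by (cases x; cases y) (simp add: D8_def)
next
  show "\<one>\<^bsub>D8\<^esub> \<in> carrier D8" by (simp add: D8_def)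
next
  fix x y z :: "int \<times> bool"
  show "x \<otimes>\<^bsub>D8\<^esub> y \<otimes>\<^bsub>D8\<^esub> z = x \<otimes>\<^bsub>D8\<^esub> (y \<otimes>\<^bsub>D8\<^esub> z)"
    by (cases x; cases y; cases z) (simp only: D8_mult prod.inject D8_mult_assoc_rotation, blast)
next
  fix x assume "x \<in> carrier D8"
  then show "\<one>\<^bsub>D8\<^esub> \<otimes>\<^bsub>D8\<^esub> x = x"
    by (cases x) (auto simp: D8_def)
next
  fix x assume x: "x \<in> carrier D8"
  obtain a b where ab: "x = (a, b)" by (cases x)
  show "\<exists>y\<in>carrier D8. y \<otimes>\<^bsub>D8\<^esub> x = \<one>\<^bsub>D8\<^esub>"
  proof (cases b)
    case True
    then show ?thesis using x ab by (intro bexI[of _ x]) (auto simp: D8_def)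
  next
    case False
    then show ?thesis using x ab by (intro bexI[of _ "((- a) mod 4, False)"]) (auto simp: D8_def mod_simps)
  qed
qed

lemma C2pow_group: "group (C2pow m)"
  unfolding C2pow_def by (rule product_group) simp

lemma C2pow_carrier: "carrier (C2pow m) = (\<Pi>\<^sub>E i\<in>{..<m}. {0..<2})"
  by (simp add: C2pow_def carrier_integer_mod_group)

lemma C2pow_one: "\<one>\<^bsub>C2pow m\<^esub> = (\<lambda>i\<in>{..<m}. 0)"
  by (simp add: C2pow_def)

lemma C2pow_mult: "f \<otimes>\<^bsub>C2pow m\<^esub> g = (\<lambda>i\<in>{..<m}. (f i + g i) mod 2)"
  by (simp add: C2pow_def)

lemma C2pow_mult_self: "f \<in> carrier (C2pow m) \<Longrightarrow> f \<otimes>\<^bsub>C2pow m\<^esub> f = \<one>\<^bsub>C2pow m\<^esub>"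
  unfolding C2pow_mult C2pow_one by (rule restrict_ext) (auto simp: C2pow_carrier)

lemma C2pow_card: "card (carrier (C2pow m)) = 2 ^ m"
  by (simp add: C2pow_carrier card_PiE)

lemma C2pow_coordinate:
  assumes "f \<in> carrier (C2pow m)" "i < m"
  shows "f i = 0 \<or> f i = 1"
proof -
  have "f i \<in> {0..<2}" using assms unfolding C2pow_carrier by blast
  then show ?thesis by auto
qed

lemma D8_C2pow_group: "group (D8 \<times>\<times> C2pow m)"
  by (rule DirProd_group[OF D8_group C2pow_group])

lemma D8_C2pow_finite: "finite (carrier (D8 \<times>\<times> C2pow m))"
proof -
  have "finite (carrier (C2pow m))" using C2pow_card[of m] card.infinite by fastforce
  then show ?thesis by (simp add: D8_carrier)
qed

lemma square_roots_one_D8: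
  "square_roots_one D8 = {(0, False), (2, False), (0, True), (1, True), (2, True), (3, True)}"
  by (auto simp: square_roots_one_def D8_carrier D8_mult D8_one)

lemma square_roots_one_D8_C2pow:
  "square_roots_one (D8 \<times>\<times> C2pow m) = square_roots_one D8 \<times> carrier (C2pow m)"
proof -
  have "{x \<in> carrier (D8 \<times>\<times> C2pow m). x \<otimes>\<^bsub>D8 \<times>\<times> C2pow m\<^esub> x = \<one>\<^bsub>D8 \<times>\<times> C2pow m\<^esub>}
      = {d \<in> carrier D8. d \<otimes>\<^bsub>D8\<^esub> d = \<one>\<^bsub>D8\<^esub>} \<times> carrier (C2pow m)"
    by (auto simp: C2pow_mult_self)
  then show ?thesis by (simp add: square_roots_one_def)
qed

lemma card_square_roots_one_D8_C2pow: "card (square_roots_one (D8 \<times>\<times> C2pow m)) = 6 * 2 ^ m"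
  by (simp add: square_roots_one_D8_C2pow square_roots_one_D8 card_cartesian_product C2pow_card)

lemma D8_C2pow_central_involution:
  fixes m :: nat
  defines "z \<equiv> ((2, False), \<one>\<^bsub>C2pow m\<^esub>)"
  shows "z \<in> carrier (D8 \<times>\<times> C2pow m)" "z \<noteq> \<one>\<^bsub>D8 \<times>\<times> C2pow m\<^esub>"
    "z \<otimes>\<^bsub>D8 \<times>\<times> C2pow m\<^esub> z = \<one>\<^bsub>D8 \<times>\<times> C2pow m\<^esub>"
    "x \<in> carrier (D8 \<times>\<times> C2pow m) \<Longrightarrow> x \<otimes>\<^bsub>D8 \<times>\<times> C2pow m\<^esub> z = z \<otimes>\<^bsub>D8 \<times>\<times> C2pow m\<^esub> x"
proof -
  interpret C: group "C2pow m" by (rule C2pow_group)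
  show "z \<in> carrier (D8 \<times>\<times> C2pow m)" by (simp add: z_def D8_carrier)
  show "z \<noteq> \<one>\<^bsub>D8 \<times>\<times> C2pow m\<^esub>" by (simp add: z_def D8_one)
  show "z \<otimes>\<^bsub>D8 \<times>\<times> C2pow m\<^esub> z = \<one>\<^bsub>D8 \<times>\<times> C2pow m\<^esub>" by (simp add: z_def D8_one D8_mult)
  assume x: "x \<in> carrier (D8 \<times>\<times> C2pow m)"
  obtain a b f where x_eq: "x = ((a, b), f)" by (metis prod.collapse)
  have "(a + (if b then - 2 else 2)) mod 4 = (2 + a) mod 4"
  proof (cases b)
    case True
    have "2 + a = (a - 2) + 4" by simp
    then have "(2 + a) mod 4 = (a - 2) mod 4" by (metis mod_add_self2)
    then show ?thesis using True by simp
  qed (simp add: algebra_simps)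
  then show "x \<otimes>\<^bsub>D8 \<times>\<times> C2pow m\<^esub> z = z \<otimes>\<^bsub>D8 \<times>\<times> C2pow m\<^esub> x"
    using x by (simp add: z_def x_eq D8_mult)
qed

(* \<phi> is a surjective homomorphism onto Z/2, written as bool under xor. *)
lemma (in group) maximal_subgroup_kernel_to_bool:
  assumes hom: "\<And>x y. x \<in> carrier G \<Longrightarrow> y \<in> carrier G \<Longrightarrow> \<phi> (x \<otimes> y) = (\<phi> x \<noteq> \<phi> y)"
    and g: "g \<in> carrier G" "\<phi> g"
  shows "maximal_subgroup {x \<in> carrier G. \<not> \<phi> x} G"
proof -
  let ?M = "{x \<in> carrier G. \<not> \<phi> x}"
  have one: "\<not> \<phi> \<one>" using hom[of \<one> \<one>] by simp
  have inv: "\<phi> (inv x) = \<phi> x" if "x \<in> carrier G" for x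
    using hom[of "inv x" x] that one by auto
  have "subgroup ?M G"
  proof
    show "?M \<subseteq> carrier G" by auto
    show "\<one> \<in> ?M" using one by simp
  next
    fix x y assume "x \<in> ?M" "y \<in> ?M"
    then show "x \<otimes> y \<in> ?M" using hom by auto
  next
    fix x assume "x \<in> ?M"
    then show "inv x \<in> ?M" using inv by auto
  qed
  moreover have "?M \<noteq> carrier G" using g by auto
  moreover have "K = ?M \<or> K = carrier G" if K: "subgroup K G" "?M \<subseteq> K" for K
  proof (cases "K \<subseteq> ?M")
    case False
    then obtain k where k: "k \<in> K" "k \<in> carrier G" "\<phi> k" using subgroup.subset[OF K(1)] by auto
    have "h \<in> K" if h: "h \<in> carrier G" "\<phi> h" for h
    proof -
      have "inv k \<otimes> h \<in> K" using K(2) hom[of "inv k" h] inv k h by auto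
      then have "k \<otimes> (inv k \<otimes> h) \<in> K" by (rule subgroup.m_closed[OF K(1) k(1)])
      then show ?thesis using k(2) h(1) by (simp add: m_assoc[symmetric])
    qed
    then have "carrier G \<subseteq> K" using K(2) by blast
    then show ?thesis using subgroup.subset[OF K(1)] by blast
  qed (use K in auto)
  ultimately show ?thesis unfolding maximal_subgroup_def by blast
qed

lemma even_mod_4_iff: "even ((k::int) mod 4) \<longleftrightarrow> even k"
  by (simp add: even_iff_mod_2_eq_zero mod_mod_cancel)

lemma maximal_subgroup_D8_C2pow_rotations:
  "maximal_subgroup {x \<in> carrier (D8 \<times>\<times> C2pow m). \<not> snd (fst x)} (D8 \<times>\<times> C2pow m)"
proof (rule group.maximal_subgroup_kernel_to_bool[OF D8_C2pow_group])
  fix x y assume "x \<in> carrier (D8 \<times>\<times> C2pow m)" "y \<in> carrier (D8 \<times>\<times> C2pow m)"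
  then show "snd (fst (x \<otimes>\<^bsub>D8 \<times>\<times> C2pow m\<^esub> y)) = (snd (fst x) \<noteq> snd (fst y))"
    by (cases x; cases y) (auto simp: D8_def)
next
  show "((0, True), \<one>\<^bsub>C2pow m\<^esub>) \<in> carrier (D8 \<times>\<times> C2pow m)"
    using monoid.one_closed[OF group.is_monoid[OF C2pow_group]] by (simp add: D8_def)
qed simp

lemma maximal_subgroup_D8_C2pow_even:
  "maximal_subgroup {x \<in> carrier (D8 \<times>\<times> C2pow m). \<not> odd (fst (fst x))} (D8 \<times>\<times> C2pow m)"
proof (rule group.maximal_subgroup_kernel_to_bool[OF D8_C2pow_group])
  fix x y assume "x \<in> carrier (D8 \<times>\<times> C2pow m)" "y \<in> carrier (D8 \<times>\<times> C2pow m)"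
  then show "odd (fst (fst (x \<otimes>\<^bsub>D8 \<times>\<times> C2pow m\<^esub> y))) = (odd (fst (fst x)) \<noteq> odd (fst (fst y)))"
    by (cases x; cases y) (auto simp: D8_def even_mod_4_iff split: if_splits)
next
  show "((1, False), \<one>\<^bsub>C2pow m\<^esub>) \<in> carrier (D8 \<times>\<times> C2pow m)"
    using monoid.one_closed[OF group.is_monoid[OF C2pow_group]] by (simp add: D8_def)
qed simp

lemma maximal_subgroup_D8_C2pow_coordinate:
  assumes i: "i < m"
  shows "maximal_subgroup {x \<in> carrier (D8 \<times>\<times> C2pow m). \<not> snd x i = 1} (D8 \<times>\<times> C2pow m)"
proof (rule group.maximal_subgroup_kernel_to_bool[OF D8_C2pow_group])
  fix x y assume "x \<in> carrier (D8 \<times>\<times> C2pow m)" "y \<in> carrier (D8 \<times>\<times> C2pow m)"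
  then have "snd x \<in> carrier (C2pow m)" "snd y \<in> carrier (C2pow m)" by auto
  then have "snd x i = 0 \<or> snd x i = 1" "snd y i = 0 \<or> snd y i = 1"
    using i C2pow_coordinate by blast+
  then show "(snd (x \<otimes>\<^bsub>D8 \<times>\<times> C2pow m\<^esub> y) i = 1) = ((snd x i = 1) \<noteq> (snd y i = 1))"
    using i by (cases x; cases y) (auto simp: C2pow_mult)
next
  show "((0, False), \<one>\<^bsub>C2pow m\<^esub>(i := 1)) \<in> carrier (D8 \<times>\<times> C2pow m)"
    using i by (auto simp: D8_def C2pow_carrier C2pow_one PiE_iff extensional_def)
qed simp

lemma C2pow_eq_one:
  assumes f: "f \<in> carrier (C2pow m)" and zero: "\<And>i. i < m \<Longrightarrow> f i = 0"
  shows "f = \<one>\<^bsub>C2pow m\<^esub>"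
proof
  fix i show "f i = \<one>\<^bsub>C2pow m\<^esub> i"
  proof (cases "i < m")
    case False
    then show ?thesis using f PiE_arb[of f "{..<m}" _ i] by (simp add: C2pow_carrier C2pow_one)
  qed (simp add: zero C2pow_one)
qed

lemma frattini_D8_C2pow_subset:
  "frattini (D8 \<times>\<times> C2pow m) \<subseteq> {\<one>\<^bsub>D8 \<times>\<times> C2pow m\<^esub>, ((2, False), \<one>\<^bsub>C2pow m\<^esub>)}"
proof
  fix u assume u: "u \<in> frattini (D8 \<times>\<times> C2pow m)"
  obtain a b f where u_eq: "u = ((a, b), f)" by (metis prod.collapse)
  have ab: "(a, b) \<in> carrier D8" and f: "f \<in> carrier (C2pow m)"
    using u u_eq by (auto simp: frattini_def)
  have in_maximal: "u \<in> M" if "maximal_subgroup M (D8 \<times>\<times> C2pow m)" for M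
    using u that by (simp add: frattini_def)
  have "\<not> b" using in_maximal[OF maximal_subgroup_D8_C2pow_rotations] u_eq by simp
  moreover have "even a" using in_maximal[OF maximal_subgroup_D8_C2pow_even] u_eq by simp
  then have "a = 0 \<or> a = 2" using ab by (auto simp: D8_carrier)
  moreover have "f i \<noteq> 1" if "i < m" for i
    using in_maximal[OF maximal_subgroup_D8_C2pow_coordinate[OF that]] u_eq by simp
  then have "f = \<one>\<^bsub>C2pow m\<^esub>" using C2pow_coordinate[OF f] by (intro C2pow_eq_one[OF f]) blast
  ultimately show "u \<in> {\<one>\<^bsub>D8 \<times>\<times> C2pow m\<^esub>, ((2, False), \<one>\<^bsub>C2pow m\<^esub>)}"
    using u_eq by (auto simp: D8_one)
qed

lemma e_num_2_D8_C2pow_lower_bound: "6 * 2 ^ m \<le> 2 * e_num 2 (D8 \<times>\<times> C2pow m) + 2"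
proof -
  let ?P = "D8 \<times>\<times> C2pow m" and ?z = "((2::int, False), \<one>\<^bsub>C2pow m\<^esub>)"
  interpret P: group ?P by (rule D8_C2pow_group)
  have "card (square_roots_one ?P - {\<one>\<^bsub>?P\<^esub>, ?z}) \<le> 2 * e_num 2 ?P"
    unfolding e_num_2_eq_card_klein_fours
    by (rule P.card_le_two_card_klein_fours[OF D8_C2pow_finite D8_C2pow_central_involution
          frattini_D8_C2pow_subset])
  moreover have "{\<one>\<^bsub>?P\<^esub>, ?z} \<subseteq> square_roots_one ?P"
    using P.one_in_square_roots_one D8_C2pow_central_involution(1,3)
    by (simp add: square_roots_one_def)
  then have "card (square_roots_one ?P - {\<one>\<^bsub>?P\<^esub>, ?z}) = card (square_roots_one ?P) - 2"
    using D8_C2pow_central_involution(2) D8_C2pow_finite P.square_roots_one_subset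
    by (subst card_Diff_subset) (auto intro: finite_subset)
  ultimately show ?thesis using card_square_roots_one_D8_C2pow[of m] by linarith
qed

theorem lemma2p6:
  fixes G :: "('a, 'b) monoid_scheme" and n :: nat
  assumes "group G" and "finite (carrier G)" and "order G = 2 ^ n" and "n \<ge> 3"
    and "extraspecial G \<or> almost_extraspecial G"
  shows "e_num 2 G \<le> e_num 2 (D8 \<times>\<times> C2pow (n - 3))"
proof -
  have "derived G (carrier G) = frattini G" "card (frattini G) = 2"
    using assms(5) by (auto simp: extraspecial_def almost_extraspecial_def)
  then have "8 * e_num 2 G + 4 \<le> 3 * order G"
    using group.e_num_2_upper_bound[OF assms(1,2)] by blast
  moreover have "order G = 8 * 2 ^ (n - 3)"
  proof -
    have "(2::nat) ^ n = 2 ^ (3 + (n - 3))" using assms(4) by simp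
    then show ?thesis using assms(3) by (simp add: power_add)
  qed
  moreover have "6 * 2 ^ (n - 3) \<le> 2 * e_num 2 (D8 \<times>\<times> C2pow (n - 3)) + 2"
    by (rule e_num_2_D8_C2pow_lower_bound)
  ultimately show ?thesis by linarith
qed

end
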